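(* Let $\gamma\in[0,\infty)$ and let $(\vec p_i(\cdot),q_i(\cdot),\vec r,s)$, $i=0,1$, be proper $m$-admissible quadruples with $\frac1{p_0(\cdot)}-\frac1{q_0(\cdot)}=\frac1{p_1(\cdot)}-\frac1{q_1(\cdot)}=\gamma$, and let $\vec w_0\in\mathcal{A}_{(\vec p_0(\cdot),q_0(\cdot)),(\vec r,s)}$, $\vec w_1\in\mathcal{A}_{(\vec p_1(\cdot),q_1(\cdot)),(\vec r,s)}$. For $\theta\in(0,1)$ define $\frac1{p_j(\cdot)}=\frac{1-\theta}{p_{0,j}(\cdot)}+\frac\theta{p_{1,j}(\cdot)}$, $\frac1{q(\cdot)}=\frac{1-\theta}{q_0(\cdot)}+\frac\theta{q_1(\cdot)}$, $w_j=w_{0,j}^{1-\theta}w_{1,j}^\theta$. Then (1) $(\vec p(\cdot),q(\cdot),\vec r,s)$ is a proper $m$-admissible quadruple with $\frac1{p(\cdot)}-\frac1{q(\cdot)}=\gamma$; (2) $\vec w\in\mathcal{A}_{(\vec p(\cdot),q(\cdot)),(\vec r,s)}$ and $[\vec w]_{\mathcal{A}_{(\vec p(\cdot),q(\cdot)),(\vec r,s)}}\le C[\vec w_0]^{1-\theta}_{\mathcal{A}_{(\vec p_0(\cdot),q_0(\cdot)),(\vec r,s)}}[\vec w_1]^\theta_{\mathcal{A}_{(\vec p_1(\cdot),q_1(\cdot)),(\vec r,s)}}$ with $C$ depending on $\vec p_0,q_0,\vec p_1,q_1,\vec r,s,\theta$.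
   Context: All exponents live on $\mathbb{R}^n$. $\mathscr{P}_0$: measurable exponents with $0<p_-\le p_+<\infty$; $\mathrm{LH}$: global log-Hölder class; Luxemburg quasinorms $\|f\|_{p(\cdot)}$. An $m$-admissible quadruple $(\vec p(\cdot),q(\cdot),\vec r,s)$: $\vec r\in(0,\infty)^m$, $s\in(0,\infty]$, $p_j\in\mathscr{P}_0$ with $r_j<(p_j)_-$, $q\in\mathscr{P}_0$ with $q_+<s$, and $\frac1{p}:=\sum_j\frac1{p_j}$ satisfies $\frac1p-\frac1q=\gamma$ for a constant $\gamma\ge0$; $\frac1r=\sum_j\frac1{r_j}$; proper means all $p_j,q\in\mathrm{LH}$. With $\nu_{\vec w}=\prod_jw_j$, $[\vec w]_{\mathcal{A}_{(\vec p(\cdot),q(\cdot)),(\vec r,s)}}=\sup_Q |Q|^{\gamma-(\frac1r-\frac1s)}\|\nu_{\vec w}\chi_Q\|_{1/(\frac1q-\frac1s)}\prod_j\|w_j^{-1}\chi_Q\|_{1/(\frac1{r_j}-\frac1{p_j})}$ over cubes $Q$ ($1/\infty=0$), and $\vec w$ belongs to the class if this is finite. *)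

theory Defs
  imports "HOL-Analysis.Analysis"
begin

text \<open>Exponents are real-valued functions on the ambient space 'a (a Euclidean space,
  playing the role of R^n).  Essential infimum / supremum of an exponent w.r.t. Lebesgue measure.\<close>

definition pminus :: "('a::euclidean_space \<Rightarrow> real) \<Rightarrow> real" where
  "pminus p = Sup {c. AE x in lebesgue. c \<le> p x}"

definition pplus :: "('a::euclidean_space \<Rightarrow> real) \<Rightarrow> real" where
  "pplus p = Inf {C. AE x in lebesgue. p x \<le> C}"

definition P0 :: "('a::euclidean_space \<Rightarrow> real) \<Rightarrow> bool" where
  "P0 p \<longleftrightarrow> p \<in> borel_measurable lebesgue
     \<and> (\<exists>C. AE x in lebesgue. p x \<le> C)
     \<and> (\<exists>c>0. AE x in lebesgue. c \<le> p x)
     \<and> 0 < pminus p \<and> pminus p \<le> pplus p"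

definition LH0 :: "('a::euclidean_space \<Rightarrow> real) \<Rightarrow> bool" where
  "LH0 p \<longleftrightarrow> (\<exists>C0. \<forall>x y. 0 < dist x y \<and> dist x y < 1/2 \<longrightarrow>
       \<bar>p x - p y\<bar> \<le> C0 / (- ln (dist x y)))"

definition LHinf :: "('a::euclidean_space \<Rightarrow> real) \<Rightarrow> bool" where
  "LHinf p \<longleftrightarrow> (\<exists>Cinf pinf. \<forall>x. \<bar>p x - pinf\<bar> \<le> Cinf / ln (exp 1 + norm x))"

definition LH :: "('a::euclidean_space \<Rightarrow> real) \<Rightarrow> bool" where
  "LH p \<longleftrightarrow> LH0 p \<and> LHinf p"

text \<open>Luxemburg (quasi)norm ||f||_{p(.)} = inf{lambda>0 : int |f/lambda|^p <= 1},
  valued in [0,infinity] (infinity if the set is empty).\<close>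
definition lux :: "('a::euclidean_space \<Rightarrow> real) \<Rightarrow> ('a \<Rightarrow> real) \<Rightarrow> ennreal" where
  "lux p f = Inf {ennreal l | l. 0 < l \<and>
       (\<integral>\<^sup>+ x. ennreal (\<bar>f x / l\<bar> powr p x) \<partial>lebesgue) \<le> 1}"

definition cube :: "'a::euclidean_space set \<Rightarrow> bool" where
  "cube Q \<longleftrightarrow> (\<exists>a l. 0 < l \<and> Q = cbox a (a + l *\<^sub>R One))"

definition inv_ext :: "ereal \<Rightarrow> real" where
  "inv_ext s = (if s = \<infinity> then 0 else 1 / real_of_ereal s)"

definition pvec :: "nat \<Rightarrow> (nat \<Rightarrow> 'a \<Rightarrow> real) \<Rightarrow> 'a \<Rightarrow> real" where
  "pvec m P x = 1 / (\<Sum>j<m. 1 / P j x)"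

definition rvec :: "nat \<Rightarrow> (nat \<Rightarrow> real) \<Rightarrow> real" where
  "rvec m r = 1 / (\<Sum>j<m. 1 / r j)"

definition admissible ::
  "nat \<Rightarrow> (nat \<Rightarrow> 'a::euclidean_space \<Rightarrow> real) \<Rightarrow> ('a \<Rightarrow> real) \<Rightarrow> (nat \<Rightarrow> real) \<Rightarrow> ereal \<Rightarrow> real \<Rightarrow> bool"
  where
  "admissible m P q r s \<gamma> \<longleftrightarrow>
     1 \<le> m \<and> (\<forall>j<m. 0 < r j) \<and> 0 < s \<and>
     (\<forall>j<m. P0 (P j) \<and> r j < pminus (P j)) \<and>
     P0 q \<and> ereal (pplus q) < s \<and>
     0 \<le> \<gamma> \<and> (AE x in lebesgue. 1 / pvec m P x - 1 / q x = \<gamma>)"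

definition proper_admissible ::
  "nat \<Rightarrow> (nat \<Rightarrow> 'a::euclidean_space \<Rightarrow> real) \<Rightarrow> ('a \<Rightarrow> real) \<Rightarrow> (nat \<Rightarrow> real) \<Rightarrow> ereal \<Rightarrow> real \<Rightarrow> bool"
  where
  "proper_admissible m P q r s \<gamma> \<longleftrightarrow>
     admissible m P q r s \<gamma> \<and> (\<forall>j<m. LH (P j)) \<and> LH q"

definition weight :: "('a::euclidean_space \<Rightarrow> real) \<Rightarrow> bool" where
  "weight w \<longleftrightarrow> w \<in> borel_measurable lebesgue \<and> (AE x in lebesgue. 0 < w x)"

definition Aconst ::
  "nat \<Rightarrow> (nat \<Rightarrow> 'a::euclidean_space \<Rightarrow> real) \<Rightarrow> ('a \<Rightarrow> real) \<Rightarrow> (nat \<Rightarrow> real) \<Rightarrow> ereal \<Rightarrow> real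
     \<Rightarrow> (nat \<Rightarrow> 'a \<Rightarrow> real) \<Rightarrow> ennreal"
  where
  "Aconst m P q r s \<gamma> w =
     (SUP Q \<in> {Q. cube Q}.
        ennreal (measure lebesgue Q powr (\<gamma> - (1 / rvec m r - inv_ext s)))
        * lux (\<lambda>x. 1 / (1 / q x - inv_ext s)) (\<lambda>x. indicator Q x * (\<Prod>j<m. w j x))
        * (\<Prod>j<m. lux (\<lambda>x. 1 / (1 / r j - 1 / P j x)) (\<lambda>x. indicator Q x / w j x)))"

definition in_Aclass ::
  "nat \<Rightarrow> (nat \<Rightarrow> 'a::euclidean_space \<Rightarrow> real) \<Rightarrow> ('a \<Rightarrow> real) \<Rightarrow> (nat \<Rightarrow> real) \<Rightarrow> ereal \<Rightarrow> real
     \<Rightarrow> (nat \<Rightarrow> 'a \<Rightarrow> real) \<Rightarrow> bool"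
  where
  "in_Aclass m P q r s \<gamma> w \<longleftrightarrow> (\<forall>j<m. weight (w j)) \<and> Aconst m P q r s \<gamma> w < top"

end

theory Submission
  imports Defs
begin

text \<open>
  Part (1) is pointwise: \<open>1/p\<^sub>\<theta>\<close> is a convex combination of \<open>1/p\<^sub>0\<close> and \<open>1/p\<^sub>1\<close>, so every
  constraint that is affine in the reciprocals of the exponents (\<open>r\<^sub>j < p\<^sub>j\<close>, \<open>q < s\<close>,
  \<open>1/p - 1/q = \<gamma>\<close>) passes to the interpolated quadruple, and since the harmonic interpolation is
  Lipschitz on compact subintervals of \<open>(0, \<infinity>)\<close>, so does log-Hoelder continuity.

  Part (2) reduces, cube by cube, to a Hoelder inequality for Luxemburg norms. The exponents
  \<open>1/(1/q - 1/s)\<close> and \<open>1/(1/r\<^sub>j - 1/p\<^sub>j)\<close> of the interpolated quadruple are again the harmonic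
  interpolations of those of the endpoint quadruples, and the functions whose norms enter
  \<open>[w]\<close> are pointwise geometric means of the endpoint ones. If \<open>|g| \<le> |f\<^sub>0|\<^bsup>1-\<theta>\<^esup> |f\<^sub>1|\<^bsup>\<theta>\<^esup>\<close>
  and all exponents are at least \<open>c\<close>, Young's inequality gives
  \<open>\<parallel>g\<parallel>\<^sub>p\<^sub>\<theta> \<le> 2\<^bsup>1/c\<^esup> \<parallel>f\<^sub>0\<parallel>\<^sub>p\<^sub>0\<^bsup>1-\<theta>\<^esup> \<parallel>f\<^sub>1\<parallel>\<^sub>p\<^sub>1\<^bsup>\<theta>\<^esup>\<close>; multiplying the \<open>m + 1\<close> factors and taking the
  supremum over cubes gives the claim with \<open>C = 2\<^bsup>(m+1)/c\<^esup>\<close>.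
\<close>

section \<open>Essential bounds of exponents\<close>


lemma AE_lebesgue_imp_everywhere:
  fixes P :: "'a::euclidean_space \<Rightarrow> bool"
  assumes "AE x in lebesgue. P x" and "open {x. \<not> P x}"
  shows "P x"
proof -
  have "{x. \<not> P x} \<in> null_sets lebesgue"
    using assms by (simp add: AE_iff_null borel_open)
  then have "{x. \<not> P x} = {}"
    using open_not_negligible[OF assms(2)] by (auto simp: negligible_iff_null_sets)
  then show ?thesis by blast
qed

lemma AE_lebesgue_const:
  assumes "AE (x::'a::euclidean_space) in lebesgue. Q"
  shows Q
  using AE_lebesgue_imp_everywhere[OF assms] by (cases Q) auto

lemma AE_lebesgue_bounds_le:
  fixes p :: "'a::euclidean_space \<Rightarrow> real"
  assumes "AE x in lebesgue. c \<le> p x" and "AE x in lebesgue. p x \<le> C"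
  shows "c \<le> C"
proof -
  have "AE (x::'a) in lebesgue. c \<le> C"
    using assms by eventually_elim simp
  then show ?thesis by (rule AE_lebesgue_const)
qed

lemma pminus_eq_uminus_pplus: "pminus p = - pplus (\<lambda>x. - p x)"
  unfolding pminus_def pplus_def Inf_real_def by (simp add: minus_image_eq_vimage vimage_def)

lemma pplus_le:
  fixes p :: "'a::euclidean_space \<Rightarrow> real"
  assumes "AE x in lebesgue. c \<le> p x" and "AE x in lebesgue. p x \<le> C"
  shows "pplus p \<le> C"
  unfolding pplus_def
proof (rule cInf_lower)
  show "C \<in> {C. AE x in lebesgue. p x \<le> C}" using assms(2) by simp
  show "bdd_below {C. AE x in lebesgue. p x \<le> C}"
    using AE_lebesgue_bounds_le[OF assms(1)] by (intro bdd_belowI[of _ c]) simp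
qed

lemma AE_le_pplus:
  fixes p :: "'a::euclidean_space \<Rightarrow> real"
  assumes lower: "AE x in lebesgue. c \<le> p x" and upper: "AE x in lebesgue. p x \<le> C"
  shows "AE x in lebesgue. p x \<le> pplus p"
proof -
  have "AE x in lebesgue. p x \<le> pplus p + e" if "0 < e" for e
  proof -
    have "{C. AE x in lebesgue. p x \<le> C} \<noteq> {}"
      using upper by auto
    moreover have "bdd_below {C. AE x in lebesgue. p x \<le> C}"
      using AE_lebesgue_bounds_le[OF lower] by (intro bdd_belowI[of _ c]) simp
    moreover have "Inf {C. AE x in lebesgue. p x \<le> C} < pplus p + e"
      using that unfolding pplus_def by simp
    ultimately obtain C where "AE x in lebesgue. p x \<le> C" "C < pplus p + e"
      by (subst (asm) cInf_less_iff) auto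
    then show ?thesis
      by (auto elim!: eventually_mono)
  qed
  then have "AE x in lebesgue. \<forall>n. p x \<le> pplus p + 1 / Suc n"
    by (simp add: AE_all_countable)
  then show ?thesis
  proof (rule eventually_mono)
    fix x assume bound: "\<forall>n. p x \<le> pplus p + 1 / Suc n"
    show "p x \<le> pplus p"
    proof (rule field_le_epsilon)
      fix e :: real assume "0 < e"
      then obtain n where "1 / Suc n < e" by (rule nat_approx_posE)
      with bound[rule_format, of n] show "p x \<le> pplus p + e" by linarith
    qed
  qed
qed

lemma le_pminus:
  fixes p :: "'a::euclidean_space \<Rightarrow> real"
  assumes "AE x in lebesgue. c \<le> p x" and "AE x in lebesgue. p x \<le> C"
  shows "c \<le> pminus p"
proof -
  have "AE x in lebesgue. - C \<le> - p x" "AE x in lebesgue. - p x \<le> - c"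
    using assms by auto
  from pplus_le[OF this] show ?thesis
    unfolding pminus_eq_uminus_pplus by simp
qed

lemma AE_pminus_le:
  fixes p :: "'a::euclidean_space \<Rightarrow> real"
  assumes "AE x in lebesgue. c \<le> p x" and "AE x in lebesgue. p x \<le> C"
  shows "AE x in lebesgue. pminus p \<le> p x"
proof -
  have "AE x in lebesgue. - C \<le> - p x" "AE x in lebesgue. - p x \<le> - c"
    using assms by auto
  from AE_le_pplus[OF this] show ?thesis
    unfolding pminus_eq_uminus_pplus by (auto elim: eventually_mono)
qed

lemma P0_AE_bounds:
  fixes p :: "'a::euclidean_space \<Rightarrow> real"
  assumes "Defs.P0 p"
  shows "AE x in lebesgue. pminus p \<le> p x \<and> p x \<le> pplus p"
proof -
  obtain c C where "AE x in lebesgue. c \<le> p x" "AE x in lebesgue. p x \<le> C"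
    using assms unfolding P0_def by blast
  from AE_pminus_le[OF this] AE_le_pplus[OF this] show ?thesis
    by eventually_elim simp
qed

section \<open>Log-Hoelder continuity\<close>

lemma LH0_continuous:
  fixes p :: "'a::euclidean_space \<Rightarrow> real"
  assumes "LH0 p"
  shows "continuous_on UNIV p"
proof -
  obtain C where C: "\<And>x y. 0 < dist x y \<and> dist x y < 1/2 \<Longrightarrow> \<bar>p x - p y\<bar> \<le> C / (- ln (dist x y))"
    using assms unfolding LH0_def by blast
  define D where "D = max C 0 + 1"
  have "\<exists>d>0. \<forall>y. dist y x < d \<longrightarrow> dist (p y) (p x) < e" if "0 < e" for x e
  proof (intro exI[of _ "min (1/2) (exp (- D / e))"] conjI allI impI)
    fix y assume close: "dist y x < min (1/2) (exp (- D / e))"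
    show "dist (p y) (p x) < e"
    proof (cases "y = x")
      case False
      then have "0 < dist y x" by simp
      with close have "D / e < - ln (dist y x)" "0 < - ln (dist y x)"
        using ln_less_cancel_iff[of "dist y x" "exp (- D / e)"] by auto
      then have "C / (- ln (dist y x)) < e"
        using \<open>0 < e\<close> by (simp add: D_def field_simps)
      moreover have "\<bar>p y - p x\<bar> \<le> C / (- ln (dist y x))"
        using C \<open>0 < dist y x\<close> close by simp
      ultimately show ?thesis by (simp add: dist_real_def)
    qed (use \<open>0 < e\<close> in simp)
  qed simp
  then show ?thesis
    unfolding continuous_on_iff by blast
qed

lemma LH_P0_bounds:
  fixes p :: "'a::euclidean_space \<Rightarrow> real"
  assumes "Defs.P0 p" and "LH p"
  shows "pminus p \<le> p x \<and> p x \<le> pplus p"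
proof (rule AE_lebesgue_imp_everywhere[OF P0_AE_bounds[OF assms(1)]])
  have "continuous_on UNIV p"
    using assms(2) LH0_continuous unfolding LH_def by blast
  then have "open ({x. p x < pminus p} \<union> {x. pplus p < p x})"
    by (intro open_Un open_Collect_less continuous_intros)
  then show "open {x. \<not> (pminus p \<le> p x \<and> p x \<le> pplus p)}"
    by (simp add: not_le Collect_disj_eq[symmetric] del: Collect_disj_eq)
qed

lemma LH0_Lipschitz_comp:
  fixes p0 p1 :: "'a::euclidean_space \<Rightarrow> real"
  assumes "LH0 p0" and "LH0 p1" and "0 \<le> K"
    and Lipschitz: "\<And>x y. \<bar>F (p0 x) (p1 x) - F (p0 y) (p1 y)\<bar> \<le> K * (\<bar>p0 x - p0 y\<bar> + \<bar>p1 x - p1 y\<bar>)"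
  shows "LH0 (\<lambda>x. F (p0 x) (p1 x))"
proof -
  obtain A B where
    A: "\<And>x y. 0 < dist x y \<and> dist x y < 1/2 \<Longrightarrow> \<bar>p0 x - p0 y\<bar> \<le> A / (- ln (dist x y))" and
    B: "\<And>x y. 0 < dist x y \<and> dist x y < 1/2 \<Longrightarrow> \<bar>p1 x - p1 y\<bar> \<le> B / (- ln (dist x y))"
    using assms(1,2) unfolding LH0_def by metis
  have "\<bar>F (p0 x) (p1 x) - F (p0 y) (p1 y)\<bar> \<le> K * (A + B) / (- ln (dist x y))"
    if "0 < dist x y \<and> dist x y < 1/2" for x y
  proof -
    have "\<bar>F (p0 x) (p1 x) - F (p0 y) (p1 y)\<bar> \<le> K * (\<bar>p0 x - p0 y\<bar> + \<bar>p1 x - p1 y\<bar>)"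
      by (rule Lipschitz)
    also have "\<dots> \<le> K * (A / (- ln (dist x y)) + B / (- ln (dist x y)))"
      using A[OF that] B[OF that] \<open>0 \<le> K\<close> by (intro mult_left_mono add_mono) auto
    finally show ?thesis
      by (simp only: distrib_left times_divide_eq_right add_divide_distrib)
  qed
  then show ?thesis
    unfolding LH0_def by blast
qed

lemma LHinf_Lipschitz_comp:
  fixes p0 p1 :: "'a::euclidean_space \<Rightarrow> real"
  assumes "LHinf p0" and "LHinf p1" and "0 \<le> K"
    and range: "\<And>x. p0 x \<in> {c..C}" "\<And>x. p1 x \<in> {c..C}"
    and Lipschitz: "\<And>a b a' b'. a \<in> {c..C} \<Longrightarrow> b \<in> {c..C} \<Longrightarrow> a' \<in> {c..C} \<Longrightarrow> b' \<in> {c..C} \<Longrightarrow>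
      \<bar>F a b - F a' b'\<bar> \<le> K * (\<bar>a - a'\<bar> + \<bar>b - b'\<bar>)"
  shows "LHinf (\<lambda>x. F (p0 x) (p1 x))"
proof -
  obtain A a B b where
    A: "\<And>x. \<bar>p0 x - a\<bar> \<le> A / ln (exp 1 + norm x)" and
    B: "\<And>x. \<bar>p1 x - b\<bar> \<le> B / ln (exp 1 + norm x)"
    using assms(1,2) unfolding LHinf_def by metis
  \<comment> \<open>The limit values may lie outside \<open>{c..C}\<close>; clamping them into it only decreases the distances.\<close>
  define clamp where "clamp t = max c (min C t)" for t
  have clamp: "clamp t \<in> {c..C}" "\<bar>u - clamp t\<bar> \<le> \<bar>u - t\<bar>" if "u \<in> {c..C}" for u t
    using that by (auto simp: clamp_def)
  have "\<bar>F (p0 x) (p1 x) - F (clamp a) (clamp b)\<bar> \<le> K * (A + B) / ln (exp 1 + norm x)" for x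
  proof -
    have "\<bar>F (p0 x) (p1 x) - F (clamp a) (clamp b)\<bar> \<le> K * (\<bar>p0 x - clamp a\<bar> + \<bar>p1 x - clamp b\<bar>)"
      using range clamp by (intro Lipschitz) auto
    also have "\<dots> \<le> K * (A / ln (exp 1 + norm x) + B / ln (exp 1 + norm x))"
      using clamp(2)[OF range(1), of x a] clamp(2)[OF range(2), of x b] A[of x] B[of x] \<open>0 \<le> K\<close>
      by (intro mult_left_mono) auto
    finally show ?thesis
      by (simp only: distrib_left times_divide_eq_right add_divide_distrib)
  qed
  then show ?thesis
    unfolding LHinf_def by blast
qed

section \<open>Harmonic interpolation of exponents\<close>

definition harm_interp :: "real \<Rightarrow> real \<Rightarrow> real \<Rightarrow> real" where
  "harm_interp \<theta> a b = 1 / ((1 - \<theta>) / a + \<theta> / b)"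

lemma inverse_harm_interp: "1 / harm_interp \<theta> a b = (1 - \<theta>) / a + \<theta> / b"
  by (simp add: harm_interp_def)

lemma harm_interp_same: "harm_interp \<theta> a a = a"
proof -
  have "(1 - \<theta>) / a + \<theta> / a = 1 / a"
    by (metis add_divide_distrib diff_add_cancel)
  then show ?thesis
    by (simp only: harm_interp_def) simp
qed

lemma harm_interp_mono:
  assumes "0 < \<theta>" "\<theta> < 1" and "0 < a" "a \<le> a'" and "0 < b" "b \<le> b'"
  shows "harm_interp \<theta> a b \<le> harm_interp \<theta> a' b'"
proof -
  have "(1 - \<theta>) / a' + \<theta> / b' \<le> (1 - \<theta>) / a + \<theta> / b"
    using assms by (intro add_mono divide_left_mono) auto
  moreover have "0 < (1 - \<theta>) / a' + \<theta> / b'"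
    using assms by (intro add_pos_pos divide_pos_pos) auto
  ultimately show ?thesis
    unfolding harm_interp_def by (intro divide_left_mono) auto
qed

lemma harm_interp_between:
  assumes "0 < \<theta>" "\<theta> < 1" and "0 < a" "0 < b"
  shows "min a b \<le> harm_interp \<theta> a b" and "harm_interp \<theta> a b \<le> max a b"
  using harm_interp_mono[OF assms(1,2), of "min a b" a "min a b" b]
    harm_interp_mono[OF assms(1,2), of a "max a b" b "max a b"] assms(3,4)
  by (simp_all add: harm_interp_same)

lemma harm_interp_atLeastAtMost:
  assumes "0 < \<theta>" "\<theta> < 1" and "0 < c" and "a \<in> {c..C}" "b \<in> {c..C}"
  shows "harm_interp \<theta> a b \<in> {c..C}"
proof -
  have "0 < a" "0 < b" "c \<le> min a b" "max a b \<le> C"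
    using assms(3-5) by auto
  with harm_interp_between[OF assms(1,2), of a b] show ?thesis
    by auto
qed

lemma abs_inverse_diff_le:
  fixes c x y :: real
  assumes "0 < c" "c \<le> x" "c \<le> y"
  shows "\<bar>1 / x - 1 / y\<bar> \<le> \<bar>x - y\<bar> / c\<^sup>2"
proof -
  have "\<bar>1 / x - 1 / y\<bar> = \<bar>x - y\<bar> / (x * y)"
    using assms by (simp add: field_simps abs_minus_commute)
  also have "\<dots> \<le> \<bar>x - y\<bar> / c\<^sup>2"
    using assms by (intro divide_left_mono) (auto simp: power2_eq_square intro: mult_mono)
  finally show ?thesis .
qed

lemma harm_interp_Lipschitz:
  assumes "0 < \<theta>" "\<theta> < 1" and "0 < c"
    and "a \<in> {c..C}" "b \<in> {c..C}" "a' \<in> {c..C}" "b' \<in> {c..C}"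
  shows "\<bar>harm_interp \<theta> a b - harm_interp \<theta> a' b'\<bar> \<le> (C / c)\<^sup>2 * (\<bar>a - a'\<bar> + \<bar>b - b'\<bar>)"
proof -
  define u u' where "u = 1 / harm_interp \<theta> a b" and "u' = 1 / harm_interp \<theta> a' b'"
  have range: "harm_interp \<theta> a b \<in> {c..C}" "harm_interp \<theta> a' b' \<in> {c..C}"
    using harm_interp_atLeastAtMost[OF assms(1-3)] assms(4-7) by auto
  then have "1 / C \<le> u" "1 / C \<le> u'"
    unfolding u_def u'_def using \<open>0 < c\<close> by (auto intro: divide_left_mono)
  have "\<bar>u - u'\<bar> = \<bar>(1 - \<theta>) * (1 / a - 1 / a') + \<theta> * (1 / b - 1 / b')\<bar>"
    unfolding u_def u'_def inverse_harm_interp by (simp add: algebra_simps)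
  also have "\<dots> \<le> (1 - \<theta>) * \<bar>1 / a - 1 / a'\<bar> + \<theta> * \<bar>1 / b - 1 / b'\<bar>"
    using assms(1,2) by (intro order.trans[OF abs_triangle_ineq]) (simp add: abs_mult)
  also have "\<dots> \<le> \<bar>1 / a - 1 / a'\<bar> + \<bar>1 / b - 1 / b'\<bar>"
    using assms(1,2) by (intro add_mono mult_left_le_one_le) auto
  also have "\<dots> \<le> \<bar>a - a'\<bar> / c\<^sup>2 + \<bar>b - b'\<bar> / c\<^sup>2"
    using assms(3-7) by (intro add_mono abs_inverse_diff_le) auto
  finally have "\<bar>u - u'\<bar> \<le> (\<bar>a - a'\<bar> + \<bar>b - b'\<bar>) / c\<^sup>2"
    by (simp add: add_divide_distrib)
  have "\<bar>harm_interp \<theta> a b - harm_interp \<theta> a' b'\<bar> = \<bar>1 / u - 1 / u'\<bar>"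
    by (simp add: u_def u'_def)
  also have "\<dots> \<le> \<bar>u - u'\<bar> / (1 / C)\<^sup>2"
    using \<open>1 / C \<le> u\<close> \<open>1 / C \<le> u'\<close> range \<open>0 < c\<close> by (intro abs_inverse_diff_le) auto
  also have "\<dots> \<le> (\<bar>a - a'\<bar> + \<bar>b - b'\<bar>) / c\<^sup>2 / (1 / C)\<^sup>2"
    by (intro divide_right_mono \<open>\<bar>u - u'\<bar> \<le> _\<close>) simp
  finally show ?thesis
    by (simp add: power_divide field_simps)
qed

lemma reciprocal_shift_harm_interp:
  "1 / (1 / harm_interp \<theta> a b - \<kappa>) = harm_interp \<theta> (1 / (1 / a - \<kappa>)) (1 / (1 / b - \<kappa>))"
  by (simp add: harm_interp_def algebra_simps)

lemma reciprocal_conj_harm_interp: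
  "1 / (1 / r - 1 / harm_interp \<theta> a b) = harm_interp \<theta> (1 / (1 / r - 1 / a)) (1 / (1 / r - 1 / b))"
  by (simp add: harm_interp_def algebra_simps) (metis add.commute add_divide_distrib diff_add_cancel)

lemma le_reciprocal_shift:
  fixes u \<kappa> :: real
  assumes "0 < u" "0 \<le> \<kappa>" "\<kappa> < 1 / u"
  shows "u \<le> 1 / (1 / u - \<kappa>)"
  using assms by (simp add: field_simps)

lemma P0_harm_interp:
  fixes p0 p1 :: "'a::euclidean_space \<Rightarrow> real"
  assumes "0 < \<theta>" "\<theta> < 1" and "Defs.P0 p0" "Defs.P0 p1"
  defines "p \<equiv> \<lambda>x. harm_interp \<theta> (p0 x) (p1 x)"
  shows "Defs.P0 p"
    and "harm_interp \<theta> (pminus p0) (pminus p1) \<le> pminus p"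
    and "pplus p \<le> harm_interp \<theta> (pplus p0) (pplus p1)"
proof -
  have pos: "0 < pminus p0" "0 < pminus p1"
    using assms(3,4) unfolding P0_def by auto
  have "AE x in lebesgue. harm_interp \<theta> (pminus p0) (pminus p1) \<le> p x
      \<and> p x \<le> harm_interp \<theta> (pplus p0) (pplus p1)"
    using P0_AE_bounds[OF assms(3)] P0_AE_bounds[OF assms(4)]
    by eventually_elim (use pos in \<open>auto simp: p_def intro!: harm_interp_mono[OF assms(1,2)]\<close>)
  then have lower: "AE x in lebesgue. harm_interp \<theta> (pminus p0) (pminus p1) \<le> p x"
    and upper: "AE x in lebesgue. p x \<le> harm_interp \<theta> (pplus p0) (pplus p1)"
    by (auto elim: eventually_mono)
  show "harm_interp \<theta> (pminus p0) (pminus p1) \<le> pminus p"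
    by (rule le_pminus[OF lower upper])
  show "pplus p \<le> harm_interp \<theta> (pplus p0) (pplus p1)"
    by (rule pplus_le[OF lower upper])
  have "pminus p \<le> pplus p"
    by (rule AE_lebesgue_bounds_le[OF AE_pminus_le[OF lower upper] AE_le_pplus[OF lower upper]])
  moreover have "0 < harm_interp \<theta> (pminus p0) (pminus p1)"
    using harm_interp_between(1)[OF assms(1,2) pos] pos by linarith
  moreover have "p0 \<in> borel_measurable lebesgue" "p1 \<in> borel_measurable lebesgue"
    using assms(3,4) unfolding P0_def by auto
  then have "p \<in> borel_measurable lebesgue"
    unfolding p_def harm_interp_def by measurable
  ultimately show "Defs.P0 p"
    unfolding P0_def using lower upper \<open>harm_interp \<theta> (pminus p0) (pminus p1) \<le> pminus p\<close>
    by auto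
qed

lemma LH_harm_interp:
  fixes p0 p1 :: "'a::euclidean_space \<Rightarrow> real"
  assumes "0 < \<theta>" "\<theta> < 1" and "Defs.P0 p0" "LH p0" and "Defs.P0 p1" "LH p1"
  shows "LH (\<lambda>x. harm_interp \<theta> (p0 x) (p1 x))"
proof -
  define c C where "c = min (pminus p0) (pminus p1)" and "C = max (pplus p0) (pplus p1)"
  have "0 < c"
    using assms(3,5) unfolding c_def P0_def by auto
  have range: "p0 x \<in> {c..C}" "p1 x \<in> {c..C}" for x
    using LH_P0_bounds[OF assms(3,4), of x] LH_P0_bounds[OF assms(5,6), of x]
    by (auto simp: c_def C_def)
  note Lipschitz = harm_interp_Lipschitz[OF assms(1,2) \<open>0 < c\<close>]
  have "LH0 p0" "LH0 p1" "LHinf p0" "LHinf p1"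
    using assms(4,6) unfolding LH_def by blast+
  have "LH0 (\<lambda>x. harm_interp \<theta> (p0 x) (p1 x))"
    by (rule LH0_Lipschitz_comp[OF \<open>LH0 p0\<close> \<open>LH0 p1\<close> zero_le_power2 Lipschitz]) (rule range)+
  moreover have "LHinf (\<lambda>x. harm_interp \<theta> (p0 x) (p1 x))"
    by (rule LHinf_Lipschitz_comp[OF \<open>LHinf p0\<close> \<open>LHinf p1\<close> zero_le_power2 range Lipschitz])
  ultimately show ?thesis
    unfolding LH_def ..
qed

lemma pvec_gap_harm_interp:
  "1 / pvec m (\<lambda>j x. harm_interp \<theta> (Pa j x) (Pb j x)) x - 1 / harm_interp \<theta> (qa x) (qb x)
    = (1 - \<theta>) * (1 / pvec m Pa x - 1 / qa x) + \<theta> * (1 / pvec m Pb x - 1 / qb x)"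
  unfolding pvec_def inverse_harm_interp
  by (simp add: sum.distrib sum_distrib_left sum_divide_distrib algebra_simps)

lemma admissible_harm_interp:
  fixes Pa Pb :: "nat \<Rightarrow> 'a::euclidean_space \<Rightarrow> real" and qa qb :: "'a \<Rightarrow> real"
  assumes adm: "admissible m Pa qa r s \<gamma>" "admissible m Pb qb r s \<gamma>" and "0 < \<theta>" "\<theta> < 1"
  shows "admissible m (\<lambda>j x. harm_interp \<theta> (Pa j x) (Pb j x)) (\<lambda>x. harm_interp \<theta> (qa x) (qb x)) r s \<gamma>"
proof -
  note A = adm[unfolded admissible_def]
  have exponents: "Defs.P0 (\<lambda>x. harm_interp \<theta> (Pa j x) (Pb j x))
      \<and> r j < pminus (\<lambda>x. harm_interp \<theta> (Pa j x) (Pb j x))" if "j < m" for j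
  proof -
    have "Defs.P0 (Pa j)" "Defs.P0 (Pb j)" "0 < r j" "r j < pminus (Pa j)" "r j < pminus (Pb j)"
      using A that by blast+
    with harm_interp_between(1)[OF assms(3,4), of "pminus (Pa j)" "pminus (Pb j)"]
      P0_harm_interp[OF assms(3,4) \<open>Defs.P0 (Pa j)\<close> \<open>Defs.P0 (Pb j)\<close>]
    show ?thesis by auto
  qed
  have "Defs.P0 qa" "Defs.P0 qb"
    using A by blast+
  then have "0 < pplus qa" "0 < pplus qb"
    unfolding P0_def by auto
  note q_interp = P0_harm_interp[OF assms(3,4) \<open>Defs.P0 qa\<close> \<open>Defs.P0 qb\<close>]
  have q_bound: "ereal (pplus (\<lambda>x. harm_interp \<theta> (qa x) (qb x))) < s"
  proof -
    have "pplus (\<lambda>x. harm_interp \<theta> (qa x) (qb x)) \<le> max (pplus qa) (pplus qb)"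
      using q_interp(3) harm_interp_between(2)[OF assms(3,4) \<open>0 < pplus qa\<close> \<open>0 < pplus qb\<close>]
      by linarith
    moreover have "ereal (pplus qa) < s" "ereal (pplus qb) < s"
      using A by blast+
    ultimately show ?thesis
      by (metis ereal_less_eq(3) max_def order.strict_trans1)
  qed
  have "AE x in lebesgue. 1 / pvec m Pa x - 1 / qa x = \<gamma>"
    and "AE x in lebesgue. 1 / pvec m Pb x - 1 / qb x = \<gamma>"
    using A by blast+
  then have gamma: "AE x in lebesgue. 1 / pvec m (\<lambda>j x. harm_interp \<theta> (Pa j x) (Pb j x)) x
      - 1 / harm_interp \<theta> (qa x) (qb x) = \<gamma>"
    by eventually_elim (simp add: pvec_gap_harm_interp algebra_simps)
  have "1 \<le> m" "\<forall>j<m. 0 < r j" "0 < s" "0 \<le> \<gamma>"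
    using A by blast+
  then show ?thesis
    unfolding admissible_def using exponents q_interp(1) q_bound gamma by blast
qed

lemma proper_admissible_harm_interp:
  fixes Pa Pb :: "nat \<Rightarrow> 'a::euclidean_space \<Rightarrow> real" and qa qb :: "'a \<Rightarrow> real"
  assumes adm: "proper_admissible m Pa qa r s \<gamma>" "proper_admissible m Pb qb r s \<gamma>" and "0 < \<theta>" "\<theta> < 1"
  shows "proper_admissible m (\<lambda>j x. harm_interp \<theta> (Pa j x) (Pb j x)) (\<lambda>x. harm_interp \<theta> (qa x) (qb x)) r s \<gamma>"
proof -
  have A: "admissible m Pa qa r s \<gamma>" "admissible m Pb qb r s \<gamma>"
    and LH: "\<forall>j<m. LH (Pa j)" "\<forall>j<m. LH (Pb j)" "LH qa" "LH qb"
    using adm unfolding proper_admissible_def by blast+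
  have "\<forall>j<m. Defs.P0 (Pa j)" "\<forall>j<m. Defs.P0 (Pb j)" "Defs.P0 qa" "Defs.P0 qb"
    using A unfolding admissible_def by blast+
  with LH have "\<forall>j<m. LH (\<lambda>x. harm_interp \<theta> (Pa j x) (Pb j x))" "LH (\<lambda>x. harm_interp \<theta> (qa x) (qb x))"
    by (simp_all add: LH_harm_interp[OF assms(3,4)])
  with admissible_harm_interp[OF A assms(3,4)] show ?thesis
    unfolding proper_admissible_def by blast
qed

section \<open>Luxemburg norms\<close>

lemma lux_le:
  assumes "0 < l" and "(\<integral>\<^sup>+ x. ennreal (\<bar>f x / l\<bar> powr p x) \<partial>lebesgue) \<le> 1"
  shows "lux p f \<le> ennreal l"
  unfolding lux_def using assms by (intro Inf_lower) auto

lemma lux_less_obtain: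
  assumes "lux p f < ennreal b"
  obtains l where "0 < l" "l < b" "(\<integral>\<^sup>+ x. ennreal (\<bar>f x / l\<bar> powr p x) \<partial>lebesgue) \<le> 1"
proof -
  obtain l where "0 < l" "ennreal l < ennreal b"
    "(\<integral>\<^sup>+ x. ennreal (\<bar>f x / l\<bar> powr p x) \<partial>lebesgue) \<le> 1"
    using assms unfolding lux_def by (auto simp: Inf_less_iff)
  then show ?thesis
    using that by (metis ennreal_less_iff less_le)
qed

lemma modular_le_1_imp_emeasure_le:
  fixes p f :: "'a::euclidean_space \<Rightarrow> real"
  assumes "0 < l" "l \<le> \<epsilon>" and modular: "(\<integral>\<^sup>+ x. ennreal (\<bar>f x / l\<bar> powr p x) \<partial>lebesgue) \<le> 1"
    and "E \<in> sets lebesgue" and E: "\<And>x. x \<in> E \<Longrightarrow> \<epsilon> \<le> \<bar>f x\<bar> \<and> \<epsilon> \<le> p x"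
  shows "emeasure lebesgue E \<le> ennreal ((l / \<epsilon>) powr \<epsilon>)"
proof -
  have "0 < \<epsilon>" "1 \<le> \<epsilon> / l"
    using assms(1,2) by auto
  have "ennreal ((\<epsilon> / l) powr \<epsilon>) * indicator E x \<le> ennreal (\<bar>f x / l\<bar> powr p x)" for x
  proof (cases "x \<in> E")
    case True
    with E have "\<epsilon> / l \<le> \<bar>f x / l\<bar>" "\<epsilon> \<le> p x"
      using \<open>0 < l\<close> by (auto simp: divide_right_mono)
    then have "(\<epsilon> / l) powr \<epsilon> \<le> \<bar>f x / l\<bar> powr p x"
      using \<open>1 \<le> \<epsilon> / l\<close> \<open>0 < \<epsilon>\<close> by (meson order.trans powr_mono powr_mono2 less_imp_le zero_le_one)
    then show ?thesis
      using True by simp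
  qed simp
  then have "(\<integral>\<^sup>+ x. ennreal ((\<epsilon> / l) powr \<epsilon>) * indicator E x \<partial>lebesgue) \<le> 1"
    by (intro order.trans[OF nn_integral_mono modular])
  then have "ennreal ((\<epsilon> / l) powr \<epsilon>) * emeasure lebesgue E \<le> 1"
    using \<open>E \<in> sets lebesgue\<close> by (simp add: nn_integral_cmult_indicator)
  then have "ennreal ((l / \<epsilon>) powr \<epsilon>) * (ennreal ((\<epsilon> / l) powr \<epsilon>) * emeasure lebesgue E) \<le> ennreal ((l / \<epsilon>) powr \<epsilon>)"
    by (metis mult.right_neutral mult_left_mono zero_le)
  moreover have "(l / \<epsilon>) powr \<epsilon> * (\<epsilon> / l) powr \<epsilon> = 1"
    using \<open>0 < l\<close> \<open>0 < \<epsilon>\<close> by (simp flip: powr_mult)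
  ultimately show ?thesis
    by (simp add: mult.assoc[symmetric] ennreal_mult[symmetric])
qed

lemma lux_eq_0_imp_null_level_set:
  fixes p f :: "'a::euclidean_space \<Rightarrow> real"
  assumes "lux p f = 0" and "0 < \<epsilon>"
    and "E \<in> sets lebesgue" and E: "\<And>x. x \<in> E \<Longrightarrow> \<epsilon> \<le> \<bar>f x\<bar> \<and> \<epsilon> \<le> p x"
  shows "E \<in> null_sets lebesgue"
proof -
  have "emeasure lebesgue E \<le> 0 + ennreal t" if "0 < t" for t
  proof -
    \<comment> \<open>The level \<open>l\<close> is chosen so that \<open>(l / \<epsilon>) powr \<epsilon> = min t 1\<close>.\<close>
    define l where "l = \<epsilon> * min t 1 powr (1 / \<epsilon>)"
    have "min t 1 powr (1 / \<epsilon>) \<le> 1"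
      using \<open>0 < t\<close> \<open>0 < \<epsilon>\<close> by (intro powr_le1) auto
    then have "0 < l" "l \<le> \<epsilon>"
      using \<open>0 < t\<close> \<open>0 < \<epsilon>\<close> by (auto simp: l_def mult_le_cancel_left1)
    then have "lux p f < ennreal l"
      using assms(1) by simp
    then obtain l' where "0 < l'" "l' < l" and modular: "(\<integral>\<^sup>+ x. ennreal (\<bar>f x / l'\<bar> powr p x) \<partial>lebesgue) \<le> 1"
      by (rule lux_less_obtain)
    have "emeasure lebesgue E \<le> ennreal ((l' / \<epsilon>) powr \<epsilon>)"
      using \<open>0 < l'\<close> \<open>l' < l\<close> \<open>l \<le> \<epsilon>\<close> by (intro modular_le_1_imp_emeasure_le[OF _ _ modular assms(3) E]) auto
    also have "\<dots> \<le> ennreal ((l / \<epsilon>) powr \<epsilon>)"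
      using \<open>0 < l'\<close> \<open>l' < l\<close> \<open>0 < \<epsilon>\<close> by (intro ennreal_leI powr_mono2 divide_right_mono) auto
    also have "(l / \<epsilon>) powr \<epsilon> = min t 1"
      using \<open>0 < t\<close> \<open>0 < \<epsilon>\<close> by (simp add: l_def powr_powr)
    also have "ennreal (min t 1) \<le> ennreal t"
      by (intro ennreal_leI) simp
    finally show ?thesis
      by simp
  qed
  then have "emeasure lebesgue E \<le> 0"
    by (rule ennreal_le_epsilon) auto
  with assms(3) show ?thesis
    by (simp add: null_sets_def)
qed

lemma lux_eq_0_imp_AE_zero:
  fixes p f :: "'a::euclidean_space \<Rightarrow> real"
  assumes "p \<in> borel_measurable lebesgue" "f \<in> borel_measurable lebesgue" and "lux p f = 0"
  shows "AE x in lebesgue. 0 < p x \<longrightarrow> f x = 0"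
proof -
  define E where "E n = {x. 1 / Suc n \<le> \<bar>f x\<bar> \<and> 1 / Suc n \<le> p x}" for n :: nat
  have "E n \<in> null_sets lebesgue" for n
  proof (rule lux_eq_0_imp_null_level_set[OF assms(3)])
    have "{x \<in> space lebesgue. 1 / Suc n \<le> \<bar>f x\<bar> \<and> 1 / Suc n \<le> p x} \<in> sets lebesgue"
      using assms(1,2) by measurable
    then show "E n \<in> sets lebesgue"
      by (simp add: E_def)
  qed (auto simp: E_def)
  then have "(\<Union>n. E n) \<in> null_sets lebesgue"
    by blast
  then show ?thesis
  proof (rule AE_I')
    show "{x \<in> space lebesgue. \<not> (0 < p x \<longrightarrow> f x = 0)} \<subseteq> (\<Union>n. E n)"
    proof
      fix x assume "x \<in> {x \<in> space lebesgue. \<not> (0 < p x \<longrightarrow> f x = 0)}"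
      then have "0 < min \<bar>f x\<bar> (p x)"
        by auto
      then obtain n where "1 / Suc n < min \<bar>f x\<bar> (p x)"
        by (rule nat_approx_posE)
      then show "x \<in> (\<Union>n. E n)"
        unfolding E_def by (auto intro!: exI[of _ n])
    qed
  qed
qed

lemma cube_not_AE_outside:
  fixes Q :: "'a::euclidean_space set"
  assumes "cube Q"
  shows "\<not> (AE x in lebesgue. x \<notin> Q)"
proof
  assume outside: "AE x in lebesgue. x \<notin> Q"
  obtain a l where "0 < l" "Q = cbox a (a + l *\<^sub>R One)"
    using assms unfolding cube_def by blast
  then have "box a (a + l *\<^sub>R One) \<subseteq> Q" "box a (a + l *\<^sub>R One) \<noteq> {}"
    by (auto simp: box_ne_empty inner_add_left dest: box_subset_cbox[THEN subsetD])
  then obtain y where "y \<in> box a (a + l *\<^sub>R One)" "\<forall>x \<in> box a (a + l *\<^sub>R One). x \<in> Q"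
    by blast
  moreover have "AE x in lebesgue. x \<notin> box a (a + l *\<^sub>R One)"
    using outside \<open>box a (a + l *\<^sub>R One) \<subseteq> Q\<close> by (auto elim: eventually_mono)
  then have "y \<notin> box a (a + l *\<^sub>R One)"
    by (rule AE_lebesgue_imp_everywhere) (simp add: open_box)
  ultimately show False
    by blast
qed

lemma lux_pos_cube:
  fixes p f :: "'a::euclidean_space \<Rightarrow> real"
  assumes "cube Q" and "p \<in> borel_measurable lebesgue" "f \<in> borel_measurable lebesgue"
    and "AE x in lebesgue. 0 < p x" "AE x in lebesgue. x \<in> Q \<longrightarrow> f x \<noteq> 0"
  shows "0 < lux p f"
proof (rule ccontr)
  assume "\<not> 0 < lux p f"
  then have "AE x in lebesgue. 0 < p x \<longrightarrow> f x = 0"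
    using lux_eq_0_imp_AE_zero assms(2,3) by (simp add: not_less)
  then have "AE x in lebesgue. x \<notin> Q"
    using assms(4,5) by eventually_elim auto
  with cube_not_AE_outside[OF assms(1)] show False
    by blast
qed

lemma harm_interp_weights_sum:
  assumes "0 < \<theta>" "\<theta> < 1" and "0 < a" "0 < b"
  shows "(1 - \<theta>) * harm_interp \<theta> a b / a + \<theta> * harm_interp \<theta> a b / b = 1"
  using inverse_harm_interp[of \<theta> a b] harm_interp_between(1)[OF assms] assms(3,4)
  by (simp add: field_simps)

lemma two_le_root_powr:
  fixes c t :: real
  assumes "0 < c" "c \<le> t"
  shows "2 \<le> (2 powr (1 / c)) powr t"
proof -
  have "(2 powr (1 / c)) powr c = 2"
    using \<open>0 < c\<close> by (simp add: powr_powr)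
  moreover have "(2 powr (1 / c)) powr c \<le> (2 powr (1 / c)) powr t"
    using assms by (intro powr_mono) (simp_all add: ge_one_powr_ge_zero)
  ultimately show ?thesis by simp
qed

lemma Young_harm_interp:
  fixes \<theta> c p0 p1 g f0 f1 l0 l1 :: real
  assumes "0 < \<theta>" "\<theta> < 1" and "0 < c" "c \<le> p0" "c \<le> p1"
    and g: "\<bar>g\<bar> \<le> \<bar>f0\<bar> powr (1 - \<theta>) * \<bar>f1\<bar> powr \<theta>" and "0 < l0" "0 < l1"
  shows "\<bar>g / (2 powr (1 / c) * l0 powr (1 - \<theta>) * l1 powr \<theta>)\<bar> powr harm_interp \<theta> p0 p1
     \<le> (\<bar>f0 / l0\<bar> powr p0 + \<bar>f1 / l1\<bar> powr p1) / 2"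
proof (cases "f0 = 0 \<or> f1 = 0")
  case True
  then have "g = 0"
    using g assms(1,2) by auto
  then show ?thesis by simp
next
  case False
  define pt K A0 A1 where "pt = harm_interp \<theta> p0 p1" and "K = 2 powr (1 / c)"
    and "A0 = \<bar>f0 / l0\<bar>" and "A1 = \<bar>f1 / l1\<bar>"
  have "0 < A0" "0 < A1"
    using False \<open>0 < l0\<close> \<open>0 < l1\<close> by (auto simp: A0_def A1_def)
  have "c \<le> pt"
    using harm_interp_between(1)[OF assms(1,2), of p0 p1] assms(3-5) by (simp add: pt_def)
  have weights: "(1 - \<theta>) * pt / p0 + \<theta> * pt / p1 = 1"
    unfolding pt_def using assms(3-5) by (intro harm_interp_weights_sum[OF assms(1,2)]) auto
  \<comment> \<open>This is where \<open>K = 2 powr (1 / c)\<close> comes from: it halves the sum of the two modulars.\<close>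
  have "2 \<le> K powr pt"
    unfolding K_def using \<open>0 < c\<close> \<open>c \<le> pt\<close> by (rule two_le_root_powr)
  have "\<bar>g / (K * l0 powr (1 - \<theta>) * l1 powr \<theta>)\<bar> \<le> A0 powr (1 - \<theta>) * A1 powr \<theta> / K"
    using g \<open>0 < l0\<close> \<open>0 < l1\<close>
    by (simp add: A0_def A1_def K_def abs_mult powr_divide abs_divide divide_right_mono field_simps)
  then have "\<bar>g / (K * l0 powr (1 - \<theta>) * l1 powr \<theta>)\<bar> powr pt \<le> (A0 powr (1 - \<theta>) * A1 powr \<theta> / K) powr pt"
    using \<open>c \<le> pt\<close> \<open>0 < c\<close> by (intro powr_mono2) auto
  also have "\<dots> = (A0 powr p0) powr ((1 - \<theta>) * pt / p0) * (A1 powr p1) powr (\<theta> * pt / p1) / K powr pt"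
    using \<open>0 < A0\<close> \<open>0 < A1\<close> assms(3-5) by (simp add: powr_divide powr_mult powr_powr K_def)
  also have "\<dots> \<le> ((1 - \<theta>) * pt / p0 * A0 powr p0 + \<theta> * pt / p1 * A1 powr p1) / 2"
    using Youngs_inequality_0[OF _ _ weights, of "A0 powr p0" "A1 powr p1"] \<open>2 \<le> K powr pt\<close>
      \<open>0 < A0\<close> \<open>0 < A1\<close> \<open>c \<le> pt\<close> assms(1-5)
    by (intro frac_le) auto
  also have "\<dots> \<le> (A0 powr p0 + A1 powr p1) / 2"
  proof -
    have "0 \<le> (1 - \<theta>) * pt / p0" "0 \<le> \<theta> * pt / p1"
      using \<open>c \<le> pt\<close> assms(1-5) by auto
    with weights have "(1 - \<theta>) * pt / p0 \<le> 1" "\<theta> * pt / p1 \<le> 1"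
      by linarith+
    with \<open>0 \<le> (1 - \<theta>) * pt / p0\<close> \<open>0 \<le> \<theta> * pt / p1\<close> show ?thesis
      by (intro divide_right_mono add_mono mult_left_le_one_le) simp_all
  qed
  finally show ?thesis
    by (simp add: pt_def K_def A0_def A1_def)
qed

text \<open>Since \<open>enn2real \<infinity> = 0\<close>, this is only meaningful for finite arguments.\<close>

definition geom_interp :: "real \<Rightarrow> real \<Rightarrow> ennreal \<Rightarrow> ennreal \<Rightarrow> ennreal" where
  "geom_interp K \<theta> x0 x1 = ennreal (K * enn2real x0 powr (1 - \<theta>) * enn2real x1 powr \<theta>)"

lemma geom_interp_mult:
  assumes "0 \<le> K" "0 \<le> K'"
  shows "geom_interp K \<theta> x0 x1 * geom_interp K' \<theta> y0 y1 = geom_interp (K * K') \<theta> (x0 * y0) (x1 * y1)"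
  using assms by (simp add: geom_interp_def enn2real_mult powr_mult ennreal_mult[symmetric] mult_ac)

lemma geom_interp_prod:
  assumes "0 \<le> K"
  shows "(\<Prod>i\<in>I. geom_interp K \<theta> (x0 i) (x1 i)) = geom_interp (K ^ card I) \<theta> (\<Prod>i\<in>I. x0 i) (\<Prod>i\<in>I. x1 i)"
proof (induction I rule: infinite_finite_induct)
  case (insert i I)
  then show ?case
    using assms by (simp add: geom_interp_mult)
qed (simp_all add: geom_interp_def)

lemma geom_interp_diag:
  assumes "0 \<le> a"
  shows "geom_interp 1 \<theta> (ennreal a) (ennreal a) = ennreal a"
  using assms by (simp add: geom_interp_def powr_add[symmetric])

lemma geom_interp_mono:
  assumes "0 \<le> K" "0 \<le> \<theta>" "\<theta> \<le> 1" and "x0 \<le> y0" "y0 < top" and "x1 \<le> y1" "y1 < top"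
  shows "geom_interp K \<theta> x0 x1 \<le> geom_interp K \<theta> y0 y1"
  unfolding geom_interp_def using assms
  by (intro ennreal_leI mult_mono mult_left_mono powr_mono2 enn2real_mono) auto

lemma lux_harm_interp_le_levels:
  fixes p0 p1 pt f0 f1 g :: "'a::euclidean_space \<Rightarrow> real"
  assumes "0 < \<theta>" "\<theta> < 1" and "0 < c"
    and measurable: "p0 \<in> borel_measurable lebesgue" "p1 \<in> borel_measurable lebesgue"
      "f0 \<in> borel_measurable lebesgue" "f1 \<in> borel_measurable lebesgue"
    and exponents: "AE x in lebesgue. c \<le> p0 x \<and> c \<le> p1 x \<and> pt x = harm_interp \<theta> (p0 x) (p1 x)"
    and dominated: "AE x in lebesgue. \<bar>g x\<bar> \<le> \<bar>f0 x\<bar> powr (1 - \<theta>) * \<bar>f1 x\<bar> powr \<theta>"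
    and "0 < l0" "0 < l1"
    and modular0: "(\<integral>\<^sup>+ x. ennreal (\<bar>f0 x / l0\<bar> powr p0 x) \<partial>lebesgue) \<le> 1"
    and modular1: "(\<integral>\<^sup>+ x. ennreal (\<bar>f1 x / l1\<bar> powr p1 x) \<partial>lebesgue) \<le> 1"
  shows "lux pt g \<le> ennreal (2 powr (1 / c) * l0 powr (1 - \<theta>) * l1 powr \<theta>)"
proof (rule lux_le)
  define K where "K = 2 powr (1 / c)"
  show "0 < 2 powr (1 / c) * l0 powr (1 - \<theta>) * l1 powr \<theta>"
    using \<open>0 < l0\<close> \<open>0 < l1\<close> by simp
  have pointwise: "AE x in lebesgue. ennreal (\<bar>g x / (K * l0 powr (1 - \<theta>) * l1 powr \<theta>)\<bar> powr pt x)
      \<le> ennreal (1 / 2) * (ennreal (\<bar>f0 x / l0\<bar> powr p0 x) + ennreal (\<bar>f1 x / l1\<bar> powr p1 x))"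
    using exponents dominated
  proof eventually_elim
    case (elim x)
    then have "\<bar>g x / (K * l0 powr (1 - \<theta>) * l1 powr \<theta>)\<bar> powr pt x
        \<le> 1 / 2 * (\<bar>f0 x / l0\<bar> powr p0 x + \<bar>f1 x / l1\<bar> powr p1 x)"
      using Young_harm_interp[OF assms(1-3), of "p0 x" "p1 x" "g x" "f0 x" "f1 x" l0 l1] \<open>0 < l0\<close> \<open>0 < l1\<close>
      by (simp add: K_def)
    then have "ennreal (\<bar>g x / (K * l0 powr (1 - \<theta>) * l1 powr \<theta>)\<bar> powr pt x)
        \<le> ennreal (1 / 2 * (\<bar>f0 x / l0\<bar> powr p0 x + \<bar>f1 x / l1\<bar> powr p1 x))"
      by (rule ennreal_leI)
    also have "\<dots> = ennreal (1 / 2) * (ennreal (\<bar>f0 x / l0\<bar> powr p0 x) + ennreal (\<bar>f1 x / l1\<bar> powr p1 x))"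
      by (subst ennreal_mult) (auto intro: arg_cong2[where f = "(*)"] ennreal_plus)
    finally show ?case .
  qed
  have "(\<integral>\<^sup>+ x. ennreal (\<bar>g x / (K * l0 powr (1 - \<theta>) * l1 powr \<theta>)\<bar> powr pt x) \<partial>lebesgue)
      \<le> (\<integral>\<^sup>+ x. ennreal (1 / 2) * (ennreal (\<bar>f0 x / l0\<bar> powr p0 x) + ennreal (\<bar>f1 x / l1\<bar> powr p1 x)) \<partial>lebesgue)"
    by (rule nn_integral_mono_AE[OF pointwise])
  also have "\<dots> = ennreal (1 / 2) * ((\<integral>\<^sup>+ x. ennreal (\<bar>f0 x / l0\<bar> powr p0 x) \<partial>lebesgue)
        + (\<integral>\<^sup>+ x. ennreal (\<bar>f1 x / l1\<bar> powr p1 x) \<partial>lebesgue))"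
    using measurable by (simp add: nn_integral_cmult nn_integral_add)
  also have "\<dots> \<le> ennreal (1 / 2) * (1 + 1)"
    using modular0 modular1 by (intro mult_left_mono add_mono) auto
  also have "\<dots> = ennreal (1 / 2) * ennreal 2"
    by simp
  also have "\<dots> = ennreal (1 / 2 * 2)"
    by (rule ennreal_mult[symmetric]) auto
  finally show "(\<integral>\<^sup>+ x. ennreal (\<bar>g x / (2 powr (1 / c) * l0 powr (1 - \<theta>) * l1 powr \<theta>)\<bar> powr pt x) \<partial>lebesgue) \<le> 1"
    by (simp add: K_def)
qed

lemma lux_harm_interp_le:
  fixes p0 p1 pt f0 f1 g :: "'a::euclidean_space \<Rightarrow> real"
  assumes "0 < \<theta>" "\<theta> < 1" and "0 < c"
    and measurable: "p0 \<in> borel_measurable lebesgue" "p1 \<in> borel_measurable lebesgue"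
      "f0 \<in> borel_measurable lebesgue" "f1 \<in> borel_measurable lebesgue"
    and exponents: "AE x in lebesgue. c \<le> p0 x \<and> c \<le> p1 x \<and> pt x = harm_interp \<theta> (p0 x) (p1 x)"
    and dominated: "AE x in lebesgue. \<bar>g x\<bar> \<le> \<bar>f0 x\<bar> powr (1 - \<theta>) * \<bar>f1 x\<bar> powr \<theta>"
    and finite: "lux p0 f0 < top" "lux p1 f1 < top"
  shows "lux pt g \<le> geom_interp (2 powr (1 / c)) \<theta> (lux p0 f0) (lux p1 f1)"
proof -
  define K where "K = 2 powr (1 / c)"
  define L0 L1 where "L0 = enn2real (lux p0 f0)" and "L1 = enn2real (lux p1 f1)"
  have L: "lux p0 f0 = ennreal L0" "lux p1 f1 = ennreal L1" "0 \<le> L0" "0 \<le> L1"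
    using finite by (auto simp: L0_def L1_def less_top)
  have approx: "lux pt g \<le> ennreal (K * (L0 + \<delta>) powr (1 - \<theta>) * (L1 + \<delta>) powr \<theta>)" if "0 < \<delta>" for \<delta>
  proof -
    obtain l0 where "0 < l0" "l0 < L0 + \<delta>" "(\<integral>\<^sup>+ x. ennreal (\<bar>f0 x / l0\<bar> powr p0 x) \<partial>lebesgue) \<le> 1"
      using lux_less_obtain[of p0 f0 "L0 + \<delta>"] L \<open>0 < \<delta>\<close> by (auto simp: ennreal_less_iff)
    moreover obtain l1 where "0 < l1" "l1 < L1 + \<delta>" "(\<integral>\<^sup>+ x. ennreal (\<bar>f1 x / l1\<bar> powr p1 x) \<partial>lebesgue) \<le> 1"
      using lux_less_obtain[of p1 f1 "L1 + \<delta>"] L \<open>0 < \<delta>\<close> by (auto simp: ennreal_less_iff)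
    ultimately have "lux pt g \<le> ennreal (K * l0 powr (1 - \<theta>) * l1 powr \<theta>)"
      unfolding K_def by (intro lux_harm_interp_le_levels[OF assms(1-3) measurable exponents dominated])
    also have "\<dots> \<le> ennreal (K * (L0 + \<delta>) powr (1 - \<theta>) * (L1 + \<delta>) powr \<theta>)"
      using \<open>0 < l0\<close> \<open>l0 < L0 + \<delta>\<close> \<open>0 < l1\<close> \<open>l1 < L1 + \<delta>\<close> assms(1,2)
      by (intro ennreal_leI mult_mono mult_left_mono powr_mono2) (auto simp: K_def)
    finally show ?thesis .
  qed
  \<comment> \<open>As \<open>1 - \<theta>\<close> and \<open>\<theta>\<close> are positive, the bound is continuous at \<open>\<delta> = 0\<close> even if a norm vanishes.\<close>
  have shift: "((\<lambda>\<delta>. L + \<delta>) \<longlongrightarrow> L) (at_right 0)" for L :: real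
    using tendsto_add[OF tendsto_const tendsto_ident_at, of L 0 "{0<..}"] by simp
  have "((\<lambda>\<delta>. ennreal (K * (L0 + \<delta>) powr (1 - \<theta>) * (L1 + \<delta>) powr \<theta>))
      \<longlongrightarrow> ennreal (K * L0 powr (1 - \<theta>) * L1 powr \<theta>)) (at_right 0)"
    using L(3,4) assms(1,2) eventually_at_right_less[of 0]
    by (intro tendsto_ennrealI tendsto_intros shift) (auto elim: eventually_mono)
  moreover have "\<forall>\<^sub>F \<delta> in at_right 0. lux pt g \<le> ennreal (K * (L0 + \<delta>) powr (1 - \<theta>) * (L1 + \<delta>) powr \<theta>)"
    using eventually_at_right_less[of "0::real"] by (auto elim: eventually_mono intro: approx)
  ultimately have "lux pt g \<le> ennreal (K * L0 powr (1 - \<theta>) * L1 powr \<theta>)"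
    by (intro tendsto_le[OF trivial_limit_at_right_real _ tendsto_const])
  then show ?thesis
    by (simp add: geom_interp_def K_def L0_def L1_def)
qed

section \<open>The constants of the weight classes\<close>

lemma inv_ext_nonneg: "0 < s \<Longrightarrow> 0 \<le> inv_ext s"
  unfolding inv_ext_def by (cases s) auto

lemma inv_ext_less:
  assumes "0 < y" "ereal y < s"
  shows "inv_ext s < 1 / y"
  using assms unfolding inv_ext_def by (cases s) (auto intro: divide_strict_left_mono)

lemma admissible_conj_exponents_lower:
  fixes P :: "nat \<Rightarrow> 'a::euclidean_space \<Rightarrow> real" and q :: "'a \<Rightarrow> real"
  assumes "admissible m P q r s \<gamma>"
  shows "AE x in lebesgue. pminus q \<le> 1 / (1 / q x - inv_ext s)"
    and "j < m \<Longrightarrow> AE x in lebesgue. r j \<le> 1 / (1 / r j - 1 / P j x)"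
proof -
  note A = assms[unfolded admissible_def]
  have "Defs.P0 q" "0 < pminus q" "ereal (pplus q) < s" "0 < s"
    using A unfolding P0_def by blast+
  from P0_AE_bounds[OF \<open>Defs.P0 q\<close>] show "AE x in lebesgue. pminus q \<le> 1 / (1 / q x - inv_ext s)"
  proof (rule eventually_mono)
    fix x assume bounds: "pminus q \<le> q x \<and> q x \<le> pplus q"
    then have "0 < q x" "ereal (q x) \<le> ereal (pplus q)"
      using \<open>0 < pminus q\<close> by auto
    then have "0 < q x" "ereal (q x) < s"
      using order.strict_trans1[OF _ \<open>ereal (pplus q) < s\<close>, of "ereal (q x)"] by simp_all
    then have "q x \<le> 1 / (1 / q x - inv_ext s)"
      using \<open>0 < s\<close> by (intro le_reciprocal_shift inv_ext_nonneg inv_ext_less)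
    with bounds show "pminus q \<le> 1 / (1 / q x - inv_ext s)"
      by linarith
  qed
  assume "j < m"
  then have "Defs.P0 (P j)" "0 < r j" "r j < pminus (P j)"
    using A by blast+
  from P0_AE_bounds[OF \<open>Defs.P0 (P j)\<close>] show "AE x in lebesgue. r j \<le> 1 / (1 / r j - 1 / P j x)"
  proof (rule eventually_mono)
    fix x assume "pminus (P j) \<le> P j x \<and> P j x \<le> pplus (P j)"
    then have "0 < P j x" "r j < P j x"
      using \<open>0 < r j\<close> \<open>r j < pminus (P j)\<close> by linarith+
    with \<open>0 < r j\<close> show "r j \<le> 1 / (1 / r j - 1 / P j x)"
      by (intro le_reciprocal_shift) (auto intro: divide_strict_left_mono)
  qed
qed

lemma weight_powr_mult:
  assumes "weight w0" "weight w1"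
  shows "weight (\<lambda>x. w0 x powr (1 - \<theta>) * w1 x powr \<theta>)"
proof -
  have "w0 \<in> borel_measurable lebesgue" "w1 \<in> borel_measurable lebesgue"
    and "AE x in lebesgue. 0 < w0 x" "AE x in lebesgue. 0 < w1 x"
    using assms unfolding weight_def by blast+
  then show ?thesis
    unfolding weight_def by (auto elim: eventually_elim2)
qed

lemma AE_weights_pos:
  fixes w :: "nat \<Rightarrow> 'a::euclidean_space \<Rightarrow> real"
  assumes "\<forall>j<m. weight (w j)"
  shows "AE x in lebesgue. \<forall>j<m. 0 < w j x"
proof -
  have "AE x in lebesgue. \<forall>j\<in>{..<m}. 0 < w j x"
    using assms unfolding weight_def by (intro AE_finite_allI) auto
  then show ?thesis
    by (auto elim: eventually_mono)
qed

lemma abs_indicator_prod_powr_le: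
  fixes u v :: "nat \<Rightarrow> real"
  assumes "\<forall>j<m. 0 < u j" "\<forall>j<m. 0 < v j"
  shows "\<bar>indicator Q x * (\<Prod>j<m. u j powr (1 - \<theta>) * v j powr \<theta>)\<bar>
     \<le> \<bar>indicator Q x * (\<Prod>j<m. u j)\<bar> powr (1 - \<theta>) * \<bar>indicator Q x * (\<Prod>j<m. v j)\<bar> powr \<theta>"
proof (cases "x \<in> Q")
  case True
  have "0 < (\<Prod>j<m. u j)" "0 < (\<Prod>j<m. v j)"
    using assms by (auto intro: prod_pos)
  with True show ?thesis
    by (auto simp: prod.distrib prod_powr_distrib intro!: mult_nonneg_nonneg prod_nonneg)
qed simp

lemma abs_indicator_divide_powr_le:
  fixes u v :: real
  assumes "0 < u" "0 < v"
  shows "\<bar>indicator Q x / (u powr (1 - \<theta>) * v powr \<theta>)\<bar>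
     \<le> \<bar>indicator Q x / u\<bar> powr (1 - \<theta>) * \<bar>indicator Q x / v\<bar> powr \<theta>"
  using assms by (cases "x \<in> Q") (simp_all add: powr_divide)

definition Acube ::
  "nat \<Rightarrow> (nat \<Rightarrow> 'a::euclidean_space \<Rightarrow> real) \<Rightarrow> ('a \<Rightarrow> real) \<Rightarrow> (nat \<Rightarrow> real) \<Rightarrow> ereal \<Rightarrow> real
     \<Rightarrow> (nat \<Rightarrow> 'a \<Rightarrow> real) \<Rightarrow> 'a set \<Rightarrow> ennreal"
  where
  "Acube m P q r s \<gamma> w Q =
     ennreal (measure lebesgue Q powr (\<gamma> - (1 / rvec m r - inv_ext s)))
     * lux (\<lambda>x. 1 / (1 / q x - inv_ext s)) (\<lambda>x. indicator Q x * (\<Prod>j<m. w j x))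
     * (\<Prod>j<m. lux (\<lambda>x. 1 / (1 / r j - 1 / P j x)) (\<lambda>x. indicator Q x / w j x))"

lemma Aconst_eq_SUP_Acube: "Aconst m P q r s \<gamma> w = (SUP Q \<in> {Q. cube Q}. Acube m P q r s \<gamma> w Q)"
  unfolding Aconst_def Acube_def ..

lemma mult_prod_less_top_factors:
  fixes x L :: ennreal and M :: "nat \<Rightarrow> ennreal"
  assumes "x * L * (\<Prod>j<m. M j) < top" and "0 < x" "0 < L" "\<forall>j<m. 0 < M j"
  shows "L < top" and "j < m \<Longrightarrow> M j < top"
proof -
  have "x * L \<noteq> 0" "(\<Prod>j<m. M j) \<noteq> 0"
    using assms(2-4) by auto
  with assms(1) have "x * L < top" "(\<Prod>j<m. M j) < top"
    by (auto simp: ennreal_mult_less_top)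
  then show "L < top"
    using assms(2) by (auto simp: ennreal_mult_less_top)
  show "M j < top" if "j < m"
  proof (rule ccontr)
    assume "\<not> M j < top"
    then have "M j = top"
      using top.not_eq_extremum by blast
    with that assms(4) have "(\<Prod>j<m. M j) = top"
      by (auto simp: ennreal_prod_eq_top)
    with \<open>(\<Prod>j<m. M j) < top\<close> show False
      by simp
  qed
qed

lemma Acube_factors_finite:
  fixes P :: "nat \<Rightarrow> 'a::euclidean_space \<Rightarrow> real" and q :: "'a \<Rightarrow> real"
  assumes "admissible m P q r s \<gamma>" and "\<forall>j<m. weight (w j)" and "cube Q"
    and "0 < measure lebesgue Q powr (\<gamma> - (1 / rvec m r - inv_ext s))"
    and "Acube m P q r s \<gamma> w Q < top"
  shows "lux (\<lambda>x. 1 / (1 / q x - inv_ext s)) (\<lambda>x. indicator Q x * (\<Prod>j<m. w j x)) < top"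
    and "j < m \<Longrightarrow> lux (\<lambda>x. 1 / (1 / r j - 1 / P j x)) (\<lambda>x. indicator Q x / w j x) < top"
proof -
  note A = assms(1)[unfolded admissible_def]
  have Q: "Q \<in> sets lebesgue"
    using \<open>cube Q\<close> unfolding cube_def by auto
  have w_meas: "\<And>j. j < m \<Longrightarrow> w j \<in> borel_measurable lebesgue"
    using assms(2) unfolding weight_def by auto
  note w_pos = AE_weights_pos[OF assms(2)]
  have "q \<in> borel_measurable lebesgue" "0 < pminus q"
    using A unfolding P0_def by blast+
  have "0 < lux (\<lambda>x. 1 / (1 / q x - inv_ext s)) (\<lambda>x. indicator Q x * (\<Prod>j<m. w j x))"
  proof (rule lux_pos_cube[OF \<open>cube Q\<close>])
    show "(\<lambda>x. 1 / (1 / q x - inv_ext s)) \<in> borel_measurable lebesgue"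
      using \<open>q \<in> borel_measurable lebesgue\<close> by measurable
    show "(\<lambda>x. indicator Q x * (\<Prod>j<m. w j x)) \<in> borel_measurable lebesgue"
      using Q w_meas by (intro borel_measurable_times borel_measurable_indicator borel_measurable_prod) auto
    show "AE x in lebesgue. 0 < 1 / (1 / q x - inv_ext s)"
      using admissible_conj_exponents_lower(1)[OF assms(1)]
      by (rule eventually_mono) (use \<open>0 < pminus q\<close> in linarith)
    show "AE x in lebesgue. x \<in> Q \<longrightarrow> indicator Q x * (\<Prod>j<m. w j x) \<noteq> 0"
      using w_pos by (rule eventually_mono) (auto simp: prod_pos less_imp_neq[symmetric])
  qed
  moreover have "\<forall>j<m. 0 < lux (\<lambda>x. 1 / (1 / r j - 1 / P j x)) (\<lambda>x. indicator Q x / w j x)"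
  proof (intro allI impI)
    fix j assume "j < m"
    then have "P j \<in> borel_measurable lebesgue" "0 < r j"
      using A unfolding P0_def by blast+
    show "0 < lux (\<lambda>x. 1 / (1 / r j - 1 / P j x)) (\<lambda>x. indicator Q x / w j x)"
    proof (rule lux_pos_cube[OF \<open>cube Q\<close>])
      show "(\<lambda>x. 1 / (1 / r j - 1 / P j x)) \<in> borel_measurable lebesgue"
        using \<open>P j \<in> borel_measurable lebesgue\<close> by measurable
      show "(\<lambda>x. indicator Q x / w j x) \<in> borel_measurable lebesgue"
        using Q w_meas[OF \<open>j < m\<close>] by (intro borel_measurable_divide borel_measurable_indicator)
      show "AE x in lebesgue. 0 < 1 / (1 / r j - 1 / P j x)"
        using admissible_conj_exponents_lower(2)[OF assms(1) \<open>j < m\<close>]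
        by (rule eventually_mono) (use \<open>0 < r j\<close> in linarith)
      show "AE x in lebesgue. x \<in> Q \<longrightarrow> indicator Q x / w j x \<noteq> 0"
        using w_pos by (rule eventually_mono) (use \<open>j < m\<close> in force)
    qed
  qed
  ultimately show "lux (\<lambda>x. 1 / (1 / q x - inv_ext s)) (\<lambda>x. indicator Q x * (\<Prod>j<m. w j x)) < top"
    and "j < m \<Longrightarrow> lux (\<lambda>x. 1 / (1 / r j - 1 / P j x)) (\<lambda>x. indicator Q x / w j x) < top"
    using mult_prod_less_top_factors[OF assms(5)[unfolded Acube_def]] assms(4) by auto
qed

lemma mult_prod_le_geom_interp:
  fixes Lt L0 L1 :: ennreal and Mt M0 M1 :: "nat \<Rightarrow> ennreal"
  assumes "0 \<le> a" "0 \<le> K"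
    and "Lt \<le> geom_interp K \<theta> L0 L1" and "\<forall>j<m. Mt j \<le> geom_interp K \<theta> (M0 j) (M1 j)"
  shows "ennreal a * Lt * (\<Prod>j<m. Mt j)
    \<le> geom_interp (K ^ Suc m) \<theta> (ennreal a * L0 * (\<Prod>j<m. M0 j)) (ennreal a * L1 * (\<Prod>j<m. M1 j))"
proof -
  have "ennreal a * Lt * (\<Prod>j<m. Mt j)
      \<le> geom_interp 1 \<theta> (ennreal a) (ennreal a) * geom_interp K \<theta> L0 L1 * (\<Prod>j<m. geom_interp K \<theta> (M0 j) (M1 j))"
    using assms by (intro mult_mono prod_mono_ennreal) (auto simp: geom_interp_diag)
  also have "\<dots> = geom_interp (K ^ Suc m) \<theta> (ennreal a * L0 * (\<Prod>j<m. M0 j)) (ennreal a * L1 * (\<Prod>j<m. M1 j))"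
    using assms(2) by (simp add: geom_interp_prod geom_interp_mult)
  finally show ?thesis .
qed

lemma lux_indicator_prod_harm_interp_le:
  fixes qa qb :: "'a::euclidean_space \<Rightarrow> real" and w0 w1 :: "nat \<Rightarrow> 'a \<Rightarrow> real"
  assumes adm: "admissible m Pa qa r s \<gamma>" "admissible m Pb qb r s \<gamma>" and "0 < \<theta>" "\<theta> < 1"
    and c: "0 < c" "c \<le> pminus qa" "c \<le> pminus qb"
    and weights: "\<forall>j<m. weight (w0 j)" "\<forall>j<m. weight (w1 j)" and "Q \<in> sets lebesgue"
    and finite: "lux (\<lambda>x. 1 / (1 / qa x - inv_ext s)) (\<lambda>x. indicator Q x * (\<Prod>j<m. w0 j x)) < top"
      "lux (\<lambda>x. 1 / (1 / qb x - inv_ext s)) (\<lambda>x. indicator Q x * (\<Prod>j<m. w1 j x)) < top"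
  shows "lux (\<lambda>x. 1 / (1 / harm_interp \<theta> (qa x) (qb x) - inv_ext s))
      (\<lambda>x. indicator Q x * (\<Prod>j<m. w0 j x powr (1 - \<theta>) * w1 j x powr \<theta>))
    \<le> geom_interp (2 powr (1 / c)) \<theta>
      (lux (\<lambda>x. 1 / (1 / qa x - inv_ext s)) (\<lambda>x. indicator Q x * (\<Prod>j<m. w0 j x)))
      (lux (\<lambda>x. 1 / (1 / qb x - inv_ext s)) (\<lambda>x. indicator Q x * (\<Prod>j<m. w1 j x)))"
proof (rule lux_harm_interp_le[OF assms(3,4) \<open>0 < c\<close> _ _ _ _ _ _ finite])
  have "qa \<in> borel_measurable lebesgue" "qb \<in> borel_measurable lebesgue"
    using adm unfolding admissible_def P0_def by blast+
  then show "(\<lambda>x. 1 / (1 / qa x - inv_ext s)) \<in> borel_measurable lebesgue"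
    "(\<lambda>x. 1 / (1 / qb x - inv_ext s)) \<in> borel_measurable lebesgue"
    by measurable
  show "(\<lambda>x. indicator Q x * (\<Prod>j<m. w0 j x)) \<in> borel_measurable lebesgue"
    "(\<lambda>x. indicator Q x * (\<Prod>j<m. w1 j x)) \<in> borel_measurable lebesgue"
    using \<open>Q \<in> sets lebesgue\<close> weights unfolding weight_def
    by (auto intro!: borel_measurable_times borel_measurable_indicator borel_measurable_prod)
  show "AE x in lebesgue. c \<le> 1 / (1 / qa x - inv_ext s) \<and> c \<le> 1 / (1 / qb x - inv_ext s)
      \<and> 1 / (1 / harm_interp \<theta> (qa x) (qb x) - inv_ext s)
        = harm_interp \<theta> (1 / (1 / qa x - inv_ext s)) (1 / (1 / qb x - inv_ext s))"
    using admissible_conj_exponents_lower(1)[OF adm(1)] admissible_conj_exponents_lower(1)[OF adm(2)]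
    by eventually_elim (use c in \<open>auto simp: reciprocal_shift_harm_interp\<close>)
  show "AE x in lebesgue. \<bar>indicator Q x * (\<Prod>j<m. w0 j x powr (1 - \<theta>) * w1 j x powr \<theta>)\<bar>
      \<le> \<bar>indicator Q x * (\<Prod>j<m. w0 j x)\<bar> powr (1 - \<theta>) * \<bar>indicator Q x * (\<Prod>j<m. w1 j x)\<bar> powr \<theta>"
    using AE_weights_pos[OF weights(1)] AE_weights_pos[OF weights(2)]
    by eventually_elim (rule abs_indicator_prod_powr_le)
qed

lemma lux_indicator_divide_harm_interp_le:
  fixes Pa Pb :: "nat \<Rightarrow> 'a::euclidean_space \<Rightarrow> real" and w0 w1 :: "nat \<Rightarrow> 'a \<Rightarrow> real"
  assumes adm: "admissible m Pa qa r s \<gamma>" "admissible m Pb qb r s \<gamma>" and "0 < \<theta>" "\<theta> < 1"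
    and "j < m" and c: "0 < c" "c \<le> r j"
    and weights: "weight (w0 j)" "weight (w1 j)" and "Q \<in> sets lebesgue"
    and finite: "lux (\<lambda>x. 1 / (1 / r j - 1 / Pa j x)) (\<lambda>x. indicator Q x / w0 j x) < top"
      "lux (\<lambda>x. 1 / (1 / r j - 1 / Pb j x)) (\<lambda>x. indicator Q x / w1 j x) < top"
  shows "lux (\<lambda>x. 1 / (1 / r j - 1 / harm_interp \<theta> (Pa j x) (Pb j x)))
      (\<lambda>x. indicator Q x / (w0 j x powr (1 - \<theta>) * w1 j x powr \<theta>))
    \<le> geom_interp (2 powr (1 / c)) \<theta>
      (lux (\<lambda>x. 1 / (1 / r j - 1 / Pa j x)) (\<lambda>x. indicator Q x / w0 j x))
      (lux (\<lambda>x. 1 / (1 / r j - 1 / Pb j x)) (\<lambda>x. indicator Q x / w1 j x))"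
proof (rule lux_harm_interp_le[OF assms(3,4) \<open>0 < c\<close> _ _ _ _ _ _ finite])
  have "Pa j \<in> borel_measurable lebesgue" "Pb j \<in> borel_measurable lebesgue"
    using adm \<open>j < m\<close> unfolding admissible_def P0_def by blast+
  then show "(\<lambda>x. 1 / (1 / r j - 1 / Pa j x)) \<in> borel_measurable lebesgue"
    "(\<lambda>x. 1 / (1 / r j - 1 / Pb j x)) \<in> borel_measurable lebesgue"
    by measurable
  show "(\<lambda>x. indicator Q x / w0 j x) \<in> borel_measurable lebesgue"
    "(\<lambda>x. indicator Q x / w1 j x) \<in> borel_measurable lebesgue"
    using \<open>Q \<in> sets lebesgue\<close> weights unfolding weight_def
    by (auto intro!: borel_measurable_divide borel_measurable_indicator)
  show "AE x in lebesgue. c \<le> 1 / (1 / r j - 1 / Pa j x) \<and> c \<le> 1 / (1 / r j - 1 / Pb j x)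
      \<and> 1 / (1 / r j - 1 / harm_interp \<theta> (Pa j x) (Pb j x))
        = harm_interp \<theta> (1 / (1 / r j - 1 / Pa j x)) (1 / (1 / r j - 1 / Pb j x))"
    using admissible_conj_exponents_lower(2)[OF adm(1) \<open>j < m\<close>]
      admissible_conj_exponents_lower(2)[OF adm(2) \<open>j < m\<close>]
    by eventually_elim (use c in \<open>auto simp: reciprocal_conj_harm_interp\<close>)
  show "AE x in lebesgue. \<bar>indicator Q x / (w0 j x powr (1 - \<theta>) * w1 j x powr \<theta>)\<bar>
      \<le> \<bar>indicator Q x / w0 j x\<bar> powr (1 - \<theta>) * \<bar>indicator Q x / w1 j x\<bar> powr \<theta>"
  proof -
    have "AE x in lebesgue. 0 < w0 j x" "AE x in lebesgue. 0 < w1 j x"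
      using weights unfolding weight_def by blast+
    then show ?thesis
      by eventually_elim (rule abs_indicator_divide_powr_le)
  qed
qed

lemma Acube_harm_interp_le:
  fixes Pa Pb :: "nat \<Rightarrow> 'a::euclidean_space \<Rightarrow> real" and qa qb :: "'a \<Rightarrow> real"
    and w0 w1 :: "nat \<Rightarrow> 'a \<Rightarrow> real"
  assumes adm: "admissible m Pa qa r s \<gamma>" "admissible m Pb qb r s \<gamma>" and \<theta>: "0 < \<theta>" "\<theta> < 1"
    and c: "0 < c" "c \<le> pminus qa" "c \<le> pminus qb" "\<forall>j<m. c \<le> r j"
    and weights: "\<forall>j<m. weight (w0 j)" "\<forall>j<m. weight (w1 j)"
    and "cube Q" and finite: "Acube m Pa qa r s \<gamma> w0 Q < top" "Acube m Pb qb r s \<gamma> w1 Q < top"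
  shows "Acube m (\<lambda>j x. harm_interp \<theta> (Pa j x) (Pb j x)) (\<lambda>x. harm_interp \<theta> (qa x) (qb x)) r s \<gamma>
      (\<lambda>j x. w0 j x powr (1 - \<theta>) * w1 j x powr \<theta>) Q
    \<le> geom_interp ((2 powr (1 / c)) ^ Suc m) \<theta> (Acube m Pa qa r s \<gamma> w0 Q) (Acube m Pb qb r s \<gamma> w1 Q)"
proof (cases "measure lebesgue Q powr (\<gamma> - (1 / rvec m r - inv_ext s)) = 0")
  case True
  then show ?thesis
    by (simp add: Acube_def)
next
  case False
  then have pos: "0 < measure lebesgue Q powr (\<gamma> - (1 / rvec m r - inv_ext s))"
    by simp
  have "Q \<in> sets lebesgue"
    using \<open>cube Q\<close> unfolding cube_def by auto
  note finite0 = Acube_factors_finite[OF adm(1) weights(1) \<open>cube Q\<close> pos finite(1)]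
  note finite1 = Acube_factors_finite[OF adm(2) weights(2) \<open>cube Q\<close> pos finite(2)]
  show ?thesis
    unfolding Acube_def
  proof (rule mult_prod_le_geom_interp)
    show "lux (\<lambda>x. 1 / (1 / harm_interp \<theta> (qa x) (qb x) - inv_ext s))
        (\<lambda>x. indicator Q x * (\<Prod>j<m. w0 j x powr (1 - \<theta>) * w1 j x powr \<theta>))
      \<le> geom_interp (2 powr (1 / c)) \<theta>
        (lux (\<lambda>x. 1 / (1 / qa x - inv_ext s)) (\<lambda>x. indicator Q x * (\<Prod>j<m. w0 j x)))
        (lux (\<lambda>x. 1 / (1 / qb x - inv_ext s)) (\<lambda>x. indicator Q x * (\<Prod>j<m. w1 j x)))"
      by (rule lux_indicator_prod_harm_interp_le[OF adm \<theta> c(1-3) weights \<open>Q \<in> sets lebesgue\<close>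
            finite0(1) finite1(1)])
    show "\<forall>j<m. lux (\<lambda>x. 1 / (1 / r j - 1 / harm_interp \<theta> (Pa j x) (Pb j x)))
        (\<lambda>x. indicator Q x / (w0 j x powr (1 - \<theta>) * w1 j x powr \<theta>))
      \<le> geom_interp (2 powr (1 / c)) \<theta>
        (lux (\<lambda>x. 1 / (1 / r j - 1 / Pa j x)) (\<lambda>x. indicator Q x / w0 j x))
        (lux (\<lambda>x. 1 / (1 / r j - 1 / Pb j x)) (\<lambda>x. indicator Q x / w1 j x))"
      using c(1,4) weights finite0(2) finite1(2) \<open>Q \<in> sets lebesgue\<close>
      by (auto intro!: lux_indicator_divide_harm_interp_le[OF adm \<theta>])
  qed simp_all
qed

lemma Aconst_harm_interp_le:
  fixes Pa Pb :: "nat \<Rightarrow> 'a::euclidean_space \<Rightarrow> real" and qa qb :: "'a \<Rightarrow> real"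
  assumes adm: "admissible m Pa qa r s \<gamma>" "admissible m Pb qb r s \<gamma>" and "0 < \<theta>" "\<theta> < 1"
    and c: "0 < c" "c \<le> pminus qa" "c \<le> pminus qb" "\<forall>j<m. c \<le> r j"
    and A: "in_Aclass m Pa qa r s \<gamma> w0" "in_Aclass m Pb qb r s \<gamma> w1"
  shows "Aconst m (\<lambda>j x. harm_interp \<theta> (Pa j x) (Pb j x)) (\<lambda>x. harm_interp \<theta> (qa x) (qb x)) r s \<gamma>
      (\<lambda>j x. w0 j x powr (1 - \<theta>) * w1 j x powr \<theta>)
    \<le> geom_interp ((2 powr (1 / c)) ^ Suc m) \<theta> (Aconst m Pa qa r s \<gamma> w0) (Aconst m Pb qb r s \<gamma> w1)"
  unfolding Aconst_eq_SUP_Acube[of m "\<lambda>j x. harm_interp \<theta> (Pa j x) (Pb j x)"]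
proof (rule SUP_least)
  fix Q :: "'a set" assume "Q \<in> {Q. cube Q}"
  then have "Acube m Pa qa r s \<gamma> w0 Q \<le> Aconst m Pa qa r s \<gamma> w0"
    "Acube m Pb qb r s \<gamma> w1 Q \<le> Aconst m Pb qb r s \<gamma> w1"
    unfolding Aconst_eq_SUP_Acube by (auto intro: SUP_upper)
  moreover have "Aconst m Pa qa r s \<gamma> w0 < top" "Aconst m Pb qb r s \<gamma> w1 < top"
    "\<forall>j<m. weight (w0 j)" "\<forall>j<m. weight (w1 j)"
    using A unfolding in_Aclass_def by auto
  ultimately show "Acube m (\<lambda>j x. harm_interp \<theta> (Pa j x) (Pb j x)) (\<lambda>x. harm_interp \<theta> (qa x) (qb x)) r s \<gamma>
      (\<lambda>j x. w0 j x powr (1 - \<theta>) * w1 j x powr \<theta>) Q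
    \<le> geom_interp ((2 powr (1 / c)) ^ Suc m) \<theta> (Aconst m Pa qa r s \<gamma> w0) (Aconst m Pb qb r s \<gamma> w1)"
    using \<open>Q \<in> {Q. cube Q}\<close> assms(3,4)
    by (intro order.trans[OF Acube_harm_interp_le[OF adm assms(3,4) c]] geom_interp_mono) auto
qed

lemma in_Aclass_harm_interp:
  fixes Pa Pb :: "nat \<Rightarrow> 'a::euclidean_space \<Rightarrow> real" and qa qb :: "'a \<Rightarrow> real"
  assumes adm: "admissible m Pa qa r s \<gamma>" "admissible m Pb qb r s \<gamma>" and "0 < \<theta>" "\<theta> < 1"
    and c: "0 < c" "c \<le> pminus qa" "c \<le> pminus qb" "\<forall>j<m. c \<le> r j"
    and A: "in_Aclass m Pa qa r s \<gamma> w0" "in_Aclass m Pb qb r s \<gamma> w1"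
  shows "in_Aclass m (\<lambda>j x. harm_interp \<theta> (Pa j x) (Pb j x)) (\<lambda>x. harm_interp \<theta> (qa x) (qb x)) r s \<gamma>
      (\<lambda>j x. w0 j x powr (1 - \<theta>) * w1 j x powr \<theta>)"
  unfolding in_Aclass_def
proof
  show "\<forall>j<m. weight (\<lambda>x. w0 j x powr (1 - \<theta>) * w1 j x powr \<theta>)"
    using A unfolding in_Aclass_def by (auto intro: weight_powr_mult)
  show "Aconst m (\<lambda>j x. harm_interp \<theta> (Pa j x) (Pb j x)) (\<lambda>x. harm_interp \<theta> (qa x) (qb x)) r s \<gamma>
      (\<lambda>j x. w0 j x powr (1 - \<theta>) * w1 j x powr \<theta>) < top"
    using Aconst_harm_interp_le[OF assms] by (auto simp: geom_interp_def intro: le_less_trans)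
qed

lemma admissible_common_lower_bound:
  assumes "admissible m Pa qa r s \<gamma>" "admissible m Pb qb r s \<gamma>"
  obtains c where "0 < c" "c \<le> pminus qa" "c \<le> pminus qb" "\<forall>j<m. c \<le> r j"
proof
  define B where "B = insert (pminus qa) (insert (pminus qb) (r ` {..<m}))"
  have "finite B" "B \<noteq> {}"
    by (auto simp: B_def)
  moreover have "\<forall>b\<in>B. 0 < b"
    using assms unfolding B_def admissible_def P0_def by auto
  ultimately show "0 < Min B"
    by simp
  have Min_le_B: "Min B \<le> b" if "b \<in> B" for b
    using \<open>finite B\<close> that by (rule Min_le)
  show "Min B \<le> pminus qa" "Min B \<le> pminus qb"
    by (rule Min_le_B, simp add: B_def)+
  show "\<forall>j<m. Min B \<le> r j"
    by (intro allI impI Min_le_B) (simp add: B_def)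
qed

theorem mainTheorem8:
  fixes m :: nat and \<gamma> \<theta> :: real and r :: "nat \<Rightarrow> real" and s :: ereal
    and P0 P1 :: "nat \<Rightarrow> 'a::euclidean_space \<Rightarrow> real" and q0 q1 :: "'a \<Rightarrow> real"
  assumes adm0: "proper_admissible m P0 q0 r s \<gamma>"
    and adm1: "proper_admissible m P1 q1 r s \<gamma>"
    and theta: "0 < \<theta>" "\<theta> < 1"
  defines "P \<equiv> (\<lambda>j x. 1 / ((1 - \<theta>) / P0 j x + \<theta> / P1 j x))"
    and "q \<equiv> (\<lambda>x. 1 / ((1 - \<theta>) / q0 x + \<theta> / q1 x))"
  shows "proper_admissible m P q r s \<gamma>
    \<and> (\<exists>C::real. 0 < C \<and>
         (\<forall>w0 w1. in_Aclass m P0 q0 r s \<gamma> w0 \<and> in_Aclass m P1 q1 r s \<gamma> w1 \<longrightarrow>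
            (let w = (\<lambda>j x. w0 j x powr (1 - \<theta>) * w1 j x powr \<theta>) in
              in_Aclass m P q r s \<gamma> w
              \<and> Aconst m P q r s \<gamma> w
                  \<le> ennreal (C * enn2real (Aconst m P0 q0 r s \<gamma> w0) powr (1 - \<theta>)
                               * enn2real (Aconst m P1 q1 r s \<gamma> w1) powr \<theta>))))"
proof -
  have P_eq: "P = (\<lambda>j x. harm_interp \<theta> (P0 j x) (P1 j x))" and q_eq: "q = (\<lambda>x. harm_interp \<theta> (q0 x) (q1 x))"
    unfolding P_def q_def harm_interp_def by simp_all
  have adm: "admissible m P0 q0 r s \<gamma>" "admissible m P1 q1 r s \<gamma>"
    using adm0 adm1 unfolding proper_admissible_def by blast+
  obtain c where c: "0 < c" "c \<le> pminus q0" "c \<le> pminus q1" "\<forall>j<m. c \<le> r j"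
    using admissible_common_lower_bound[OF adm] .
  note interp_bound = Aconst_harm_interp_le[OF adm theta c, unfolded geom_interp_def]
  show ?thesis
    unfolding P_eq q_eq Let_def
    using proper_admissible_harm_interp[OF adm0 adm1 theta] in_Aclass_harm_interp[OF adm theta c] interp_bound
    by (intro conjI exI[of _ "(2 powr (1 / c)) ^ Suc m"]) auto
qed

end
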